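(* Let $\mathcal{H}$ be an indexed preorder with existential quantification, and let $\mathcal{A}\subseteq\mathcal{H}$ be an indexed sub-preorder such that (1) every predicate in $\mathcal{A}$ is $\exists$-prime in $\mathcal{H}$, and (2) for every set $I$ and predicate $\varphi\in\mathcal{H}(I)$ there exist a function $u:J\to I$ and $\pi\in\mathcal{A}(J)$ with $\varphi\cong\exists_u\pi$. Then the inclusion $\mathcal{A}\hookrightarrow\mathcal{H}$ is an $\exists$-completion, and moreover $\mathcal{A}\hookrightarrow\mathsf{prim}(\mathcal{H})$ is an equivalence, i.e. every $\exists$-prime predicate of $\mathcal{H}$ is isomorphic to one in $\mathcal{A}$. In particular, if $\mathcal{H}$ has enough $\exists$-prime predicates, then $\mathsf{prim}(\mathcal{H})\hookrightarrow\mathcal{H}$ is an $\exists$-completion.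
   Context: An indexed preorder is a pseudofunctor $\mathcal{H}:\mathsf{Set}^{op}\to\mathsf{Ord}$; elements of $\mathcal{H}(I)$ are predicates on $I$, and $u^*=\mathcal{H}(u)$ for $u:J\to I$. $\mathsf{IOrd}$ denotes the locally ordered category of indexed preorders and pseudonatural transformations (indexed monotone maps), ordered componentwise. $\mathcal{H}$ has existential quantification if every $u^*:\mathcal{H}(I)\to\mathcal{H}(J)$ has a left adjoint $\exists_u$ and the Beck–Chevalley condition holds: for every pullback square in $\mathsf{Set}$ with $\bar u:L\to K$, $\bar v:L\to J$, $u:J\to I$, $v:K\to I$, one has $u^*\circ\exists_v\cong\exists_{\bar v}\circ\bar u^*$. An indexed monotone map $f:\mathcal{H}\to\mathcal{K}$ commutes with existential quantification if $f_I\circ\exists_u\cong\exists_u\circ f_J$ for all $u:J\to I$; $\exists\text{-}\mathsf{IOrd}$ is the sub-2-category of indexed preorders with existential quantification and such maps. An indexed monotone map $f:\mathcal{A}\to\mathcal{H}$ into an indexed preorder with existential quantification is an $\exists$-completion if for every $\mathcal{K}$ with existential quantification, precomposition $\exists\text{-}\mathsf{IOrd}(\mathcal{H},\mathcal{K})\to\mathsf{IOrd}(\mathcal{A},\mathcal{K})$ is an equivalence of preorders. For $\mathcal{H}$ with existential quantification, $\pi\in\mathcal{H}(I)$ is $\exists$-prime if for all functions $I\xleftarrow{u}J\xleftarrow{v}K$ and $\varphi\in\mathcal{H}(K)$ with $u^*\pi\le\exists_v\varphi$ there is $s:J\to K$ with $v\circ s=\mathrm{id}_J$ and $u^*\pi\le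 s^*\varphi$. $\mathsf{prim}(\mathcal{H})$ is the indexed sub-preorder of $\exists$-prime predicates, and $\mathcal{H}$ has enough $\exists$-prime predicates if every $\varphi\in\mathcal{H}(I)$ is isomorphic to $\exists_u\pi$ for some $u:J\to I$ and $\exists$-prime $\pi\in\mathcal{H}(J)$. *)

theory Defs
  imports "HOL-Library.FuncSet"
begin

text \<open>Model of Set: subsets of a fixed universe type 'u; a function J \<rightarrow> I is an
  extensional function in J -> I (extensional).  An indexed preorder H assigns to each
  I a carrier of predicates (ip_car H I), a preorder (ip_le H I), and to each
  u : J \<rightarrow> I the reindexing u^* = ip_rx H u J I : H(I) \<rightarrow> H(J).\<close>

record ('u, 'p) ipre =
  ip_car :: "'u set \<Rightarrow> 'p set"
  ip_le  :: "'u set \<Rightarrow> 'p \<Rightarrow> 'p \<Rightarrow> bool"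
  ip_rx  :: "('u \<Rightarrow> 'u) \<Rightarrow> 'u set \<Rightarrow> 'u set \<Rightarrow> 'p \<Rightarrow> 'p"

definition ip_iso :: "('u, 'p) ipre \<Rightarrow> 'u set \<Rightarrow> 'p \<Rightarrow> 'p \<Rightarrow> bool" where
  "ip_iso H I x y \<longleftrightarrow> ip_le H I x y \<and> ip_le H I y x"

definition indexed_preorder :: "('u, 'p) ipre \<Rightarrow> bool" where
  "indexed_preorder H \<longleftrightarrow>
     (\<forall>I. \<forall>x\<in>ip_car H I. ip_le H I x x) \<and>
     (\<forall>I. \<forall>x\<in>ip_car H I. \<forall>y\<in>ip_car H I. \<forall>z\<in>ip_car H I.
         ip_le H I x y \<longrightarrow> ip_le H I y z \<longrightarrow> ip_le H I x z) \<and>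
     (\<forall>I J u. u \<in> J \<rightarrow>\<^sub>E I \<longrightarrow> (\<forall>x\<in>ip_car H I. ip_rx H u J I x \<in> ip_car H J)) \<and>
     (\<forall>I J u. u \<in> J \<rightarrow>\<^sub>E I \<longrightarrow> (\<forall>x\<in>ip_car H I. \<forall>y\<in>ip_car H I.
         ip_le H I x y \<longrightarrow> ip_le H J (ip_rx H u J I x) (ip_rx H u J I y))) \<and>
     (\<forall>I. \<forall>x\<in>ip_car H I. ip_iso H I (ip_rx H (\<lambda>i\<in>I. i) I I x) x) \<and>
     (\<forall>I J K u v. u \<in> J \<rightarrow>\<^sub>E I \<longrightarrow> v \<in> K \<rightarrow>\<^sub>E J \<longrightarrow>
         (\<forall>x\<in>ip_car H I. ip_iso H K (ip_rx H (compose K u v) K I x)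
                                       (ip_rx H v K J (ip_rx H u J I x))))"

definition is_pullback ::
  "'u set \<Rightarrow> 'u set \<Rightarrow> 'u set \<Rightarrow> 'u set \<Rightarrow> ('u \<Rightarrow> 'u) \<Rightarrow> ('u \<Rightarrow> 'u) \<Rightarrow> ('u \<Rightarrow> 'u) \<Rightarrow> ('u \<Rightarrow> 'u) \<Rightarrow> bool"
  where
  "is_pullback I J K L u v ub vb \<longleftrightarrow>
     u \<in> J \<rightarrow>\<^sub>E I \<and> v \<in> K \<rightarrow>\<^sub>E I \<and> ub \<in> L \<rightarrow>\<^sub>E K \<and> vb \<in> L \<rightarrow>\<^sub>E J \<and>
     bij_betw (\<lambda>l. (vb l, ub l)) L {(j, k). j \<in> J \<and> k \<in> K \<and> u j = v k}"

definition has_exists ::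
  "('u, 'p) ipre \<Rightarrow> (('u \<Rightarrow> 'u) \<Rightarrow> 'u set \<Rightarrow> 'u set \<Rightarrow> 'p \<Rightarrow> 'p) \<Rightarrow> bool" where
  "has_exists H ex \<longleftrightarrow>
     (\<forall>I J u. u \<in> J \<rightarrow>\<^sub>E I \<longrightarrow> (\<forall>x\<in>ip_car H J. ex u J I x \<in> ip_car H I \<and>
        (\<forall>y\<in>ip_car H I. ip_le H I (ex u J I x) y \<longleftrightarrow> ip_le H J x (ip_rx H u J I y)))) \<and>
     (\<forall>I J K L u v ub vb. is_pullback I J K L u v ub vb \<longrightarrow>
        (\<forall>x\<in>ip_car H K. ip_iso H J (ip_rx H u J I (ex v K I x)) (ex vb L J (ip_rx H ub L K x))))"

definition ihom :: "('u, 'p) ipre \<Rightarrow> ('u, 'q) ipre \<Rightarrow> ('u set \<Rightarrow> 'p \<Rightarrow> 'q) \<Rightarrow> bool" where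
  "ihom H K f \<longleftrightarrow>
     (\<forall>I. \<forall>x\<in>ip_car H I. f I x \<in> ip_car K I) \<and>
     (\<forall>I. \<forall>x\<in>ip_car H I. \<forall>y\<in>ip_car H I. ip_le H I x y \<longrightarrow> ip_le K I (f I x) (f I y)) \<and>
     (\<forall>I J u. u \<in> J \<rightarrow>\<^sub>E I \<longrightarrow> (\<forall>x\<in>ip_car H I.
         ip_iso K J (f J (ip_rx H u J I x)) (ip_rx K u J I (f I x))))"

definition ex_hom ::
  "('u, 'p) ipre \<Rightarrow> (('u \<Rightarrow> 'u) \<Rightarrow> 'u set \<Rightarrow> 'u set \<Rightarrow> 'p \<Rightarrow> 'p) \<Rightarrow>
   ('u, 'q) ipre \<Rightarrow> (('u \<Rightarrow> 'u) \<Rightarrow> 'u set \<Rightarrow> 'u set \<Rightarrow> 'q \<Rightarrow> 'q) \<Rightarrow>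
   ('u set \<Rightarrow> 'p \<Rightarrow> 'q) \<Rightarrow> bool" where
  "ex_hom H exH K exK f \<longleftrightarrow> ihom H K f \<and>
     (\<forall>I J u. u \<in> J \<rightarrow>\<^sub>E I \<longrightarrow> (\<forall>x\<in>ip_car H J.
         ip_iso K I (f I (exH u J I x)) (exK u J I (f J x))))"

definition hom_le :: "('u, 'p) ipre \<Rightarrow> ('u, 'q) ipre \<Rightarrow> ('u set \<Rightarrow> 'p \<Rightarrow> 'q) \<Rightarrow> ('u set \<Rightarrow> 'p \<Rightarrow> 'q) \<Rightarrow> bool" where
  "hom_le H K f g \<longleftrightarrow> (\<forall>I. \<forall>x\<in>ip_car H I. ip_le K I (f I x) (g I x))"

definition preorder_equiv ::
  "'a set \<Rightarrow> ('a \<Rightarrow> 'a \<Rightarrow> bool) \<Rightarrow> 'b set \<Rightarrow> ('b \<Rightarrow> 'b \<Rightarrow> bool) \<Rightarrow> ('a \<Rightarrow> 'b) \<Rightarrow> bool" where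
  "preorder_equiv X leX Y leY F \<longleftrightarrow>
     (\<forall>x\<in>X. F x \<in> Y) \<and> (\<forall>x\<in>X. \<forall>x'\<in>X. leX x x' \<longrightarrow> leY (F x) (F x')) \<and>
     (\<exists>G. (\<forall>y\<in>Y. G y \<in> X) \<and> (\<forall>y\<in>Y. \<forall>y'\<in>Y. leY y y' \<longrightarrow> leX (G y) (G y')) \<and>
          (\<forall>x\<in>X. leX (G (F x)) x \<and> leX x (G (F x))) \<and>
          (\<forall>y\<in>Y. leY (F (G y)) y \<and> leY y (F (G y))))"

definition sub_preorder :: "('u, 'p) ipre \<Rightarrow> ('u set \<Rightarrow> 'p set) \<Rightarrow> bool" where
  "sub_preorder H A \<longleftrightarrow> (\<forall>I. A I \<subseteq> ip_car H I) \<and>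
     (\<forall>I J u. u \<in> J \<rightarrow>\<^sub>E I \<longrightarrow> (\<forall>x\<in>A I. ip_rx H u J I x \<in> A J))"

text \<open>The inclusion A \<hookrightarrow> H is an \<exists>-completion with respect to the target K:
  precomposition with the inclusion, \<exists>-IOrd(H,K) \<rightarrow> IOrd(A,K), is an equivalence.\<close>
definition ex_completion_wrt ::
  "('u, 'p) ipre \<Rightarrow> (('u \<Rightarrow> 'u) \<Rightarrow> 'u set \<Rightarrow> 'u set \<Rightarrow> 'p \<Rightarrow> 'p) \<Rightarrow> ('u set \<Rightarrow> 'p set) \<Rightarrow>
   ('u, 'q) ipre \<Rightarrow> (('u \<Rightarrow> 'u) \<Rightarrow> 'u set \<Rightarrow> 'u set \<Rightarrow> 'q \<Rightarrow> 'q) \<Rightarrow> bool" where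
  "ex_completion_wrt H exH A K exK \<longleftrightarrow>
     preorder_equiv {g. ex_hom H exH K exK g} (hom_le H K)
                    {f. ihom (H\<lparr>ip_car := A\<rparr>) K f} (hom_le (H\<lparr>ip_car := A\<rparr>) K) (\<lambda>g. g)"

definition ex_prime ::
  "('u, 'p) ipre \<Rightarrow> (('u \<Rightarrow> 'u) \<Rightarrow> 'u set \<Rightarrow> 'u set \<Rightarrow> 'p \<Rightarrow> 'p) \<Rightarrow> 'u set \<Rightarrow> 'p \<Rightarrow> bool" where
  "ex_prime H ex I p \<longleftrightarrow> p \<in> ip_car H I \<and>
     (\<forall>J K u v x. u \<in> J \<rightarrow>\<^sub>E I \<longrightarrow> v \<in> K \<rightarrow>\<^sub>E J \<longrightarrow> x \<in> ip_car H K \<longrightarrow>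
        ip_le H J (ip_rx H u J I p) (ex v K J x) \<longrightarrow>
        (\<exists>s \<in> J \<rightarrow>\<^sub>E K. (\<forall>j\<in>J. v (s j) = j) \<and> ip_le H J (ip_rx H u J I p) (ip_rx H s J K x)))"

definition prim :: "('u, 'p) ipre \<Rightarrow> (('u \<Rightarrow> 'u) \<Rightarrow> 'u set \<Rightarrow> 'u set \<Rightarrow> 'p \<Rightarrow> 'p) \<Rightarrow> 'u set \<Rightarrow> 'p set" where
  "prim H ex I = {p. ex_prime H ex I p}"

definition enough_primes :: "('u, 'p) ipre \<Rightarrow> (('u \<Rightarrow> 'u) \<Rightarrow> 'u set \<Rightarrow> 'u set \<Rightarrow> 'p \<Rightarrow> 'p) \<Rightarrow> bool" where
  "enough_primes H ex \<longleftrightarrow> (\<forall>I. \<forall>x\<in>ip_car H I. \<exists>J u p.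
      u \<in> J \<rightarrow>\<^sub>E I \<and> ex_prime H ex J p \<and> ip_iso H I x (ex u J I p))"

end

theory Submission imports Defs begin

(* Every predicate x is isomorphic to \<exists>[u] a for some a in A, so an indexed monotone map f on A
   has the candidate extension x \<mapsto> \<exists>[u] f(a), computed from a chosen such cover of x (a left
   Kan extension along the inclusion).  Everything rests on a factorisation property of
   \<exists>-primes: if a is \<exists>-prime and \<exists>[u] a \<le> \<exists>[u'] a', then adjunction and Beck-Chevalley along
   the pullback (ub, vb) of u and u' give a \<le> \<exists>[vb] ub\<^sup>* a', and primality gives a section s of vb,
   so that w = ub \<circ> s satisfies u' \<circ> w = u and a \<le> w\<^sup>* a'.  Hence \<exists>[u] f(a) \<le> \<exists>[u'] f(a'),
   which makes the extension independent of the cover and monotone; Beck-Chevalley in the target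
   makes it commute with reindexing, and composing quantifiers makes it commute with \<exists>.
   The same primality argument turns a prime p \<cong> \<exists>[u] a into p \<cong> s\<^sup>* a for a section s of u,
   so every \<exists>-prime predicate lies in A up to isomorphism. *)

lemma compose_PiE: "f \<in> A \<rightarrow>\<^sub>E B \<Longrightarrow> g \<in> B \<rightarrow>\<^sub>E C \<Longrightarrow> compose A g f \<in> A \<rightarrow>\<^sub>E C"
  by (auto simp: compose_def)

lemma inj_pair_if_infinite:
  assumes "infinite (UNIV :: 'u set)"
  obtains e :: "'u \<times> 'u \<Rightarrow> 'u" where "inj e"
  using ordIso_imp_ordLeq[OF card_of_Times_same_infinite[OF assms]] that
  by (auto simp: card_of_ordLeq[symmetric])

(* Index sets are subsets of the type 'u, so the pullback, a subset of 'u \<times> 'u, has to be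
   re-embedded into 'u: this is the only use of the infinity of 'u. *)
lemma pullback_exists:
  assumes "infinite (UNIV :: 'u set)" and u: "u \<in> J \<rightarrow>\<^sub>E I" and v: "v \<in> K \<rightarrow>\<^sub>E I"
  obtains L :: "'u set" and ub vb where "is_pullback I J K L u v ub vb"
proof -
  obtain e :: "'u \<times> 'u \<Rightarrow> 'u" where e: "inj e"
    using inj_pair_if_infinite[OF assms(1)] .
  define P where "P = {(j, k). j \<in> J \<and> k \<in> K \<and> u j = v k}"
  define L where "L = e ` P"
  define ub where "ub = (\<lambda>l\<in>L. snd (inv_into P e l))"
  define vb where "vb = (\<lambda>l\<in>L. fst (inv_into P e l))"
  have bij: "bij_betw (inv_into P e) L P"
    unfolding L_def by (rule bij_betw_inv_into[OF inj_on_imp_bij_betw[OF inj_on_subset[OF e]]]) simp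
  then have "bij_betw (\<lambda>l. (vb l, ub l)) L P"
    by (rule bij_betw_cong[THEN iffD1, rotated]) (simp add: ub_def vb_def)
  moreover have "ub \<in> L \<rightarrow>\<^sub>E K" "vb \<in> L \<rightarrow>\<^sub>E J"
    using bij_betwE[OF bij] by (auto simp: ub_def vb_def P_def)
  ultimately show ?thesis
    using that u v unfolding is_pullback_def P_def by blast
qed

lemma ip_isoD1: "ip_iso H I x y \<Longrightarrow> ip_le H I x y"
  and ip_isoD2: "ip_iso H I x y \<Longrightarrow> ip_le H I y x"
  by (simp_all add: ip_iso_def)

lemma ip_iso_sym: "ip_iso H I x y \<Longrightarrow> ip_iso H I y x"
  by (simp add: ip_iso_def)

lemma ihom_closed: "ihom H K f \<Longrightarrow> x \<in> ip_car H I \<Longrightarrow> f I x \<in> ip_car K I"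
  by (simp add: ihom_def)

lemma ihom_mono:
  "ihom H K f \<Longrightarrow> ip_le H I x y \<Longrightarrow> x \<in> ip_car H I \<Longrightarrow> y \<in> ip_car H I \<Longrightarrow>
    ip_le K I (f I x) (f I y)"
  by (simp add: ihom_def)

lemma ihom_iso:
  "ihom H K f \<Longrightarrow> ip_iso H I x y \<Longrightarrow> x \<in> ip_car H I \<Longrightarrow> y \<in> ip_car H I \<Longrightarrow>
    ip_iso K I (f I x) (f I y)"
  by (simp add: ip_iso_def ihom_mono)

lemma ex_hom_ex:
  "ex_hom H exH K exK f \<Longrightarrow> u \<in> J \<rightarrow>\<^sub>E I \<Longrightarrow> x \<in> ip_car H J \<Longrightarrow>
    ip_iso K I (f I (exH u J I x)) (exK u J I (f J x))"
  by (simp add: ex_hom_def)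

lemma ihom_restrict: "ihom H K f \<Longrightarrow> (\<And>I. A I \<subseteq> ip_car H I) \<Longrightarrow> ihom (H\<lparr>ip_car := A\<rparr>) K f"
  unfolding ihom_def by (simp add: subset_iff)

lemma hom_le_restrict:
  "hom_le H K f g \<Longrightarrow> (\<And>I. A I \<subseteq> ip_car H I) \<Longrightarrow> hom_le (H\<lparr>ip_car := A\<rparr>) K f g"
  unfolding hom_le_def by (simp add: subset_iff)

locale exists_ipre =
  fixes H :: "('u, 'p) ipre" and ex :: "('u \<Rightarrow> 'u) \<Rightarrow> 'u set \<Rightarrow> 'u set \<Rightarrow> 'p \<Rightarrow> 'p"
  assumes indexed_preorder: "indexed_preorder H" and has_exists: "has_exists H ex"
begin

lemma ip_refl: "x \<in> ip_car H I \<Longrightarrow> ip_le H I x x"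
  using indexed_preorder by (simp add: indexed_preorder_def)

lemma ip_trans [trans]:
  "ip_le H I x y \<Longrightarrow> ip_le H I y z \<Longrightarrow>
    x \<in> ip_car H I \<Longrightarrow> y \<in> ip_car H I \<Longrightarrow> z \<in> ip_car H I \<Longrightarrow> ip_le H I x z"
  using indexed_preorder[unfolded indexed_preorder_def, THEN conjunct2, THEN conjunct1] by blast

lemma ip_iso_trans [trans]:
  "ip_iso H I x y \<Longrightarrow> ip_iso H I y z \<Longrightarrow>
    x \<in> ip_car H I \<Longrightarrow> y \<in> ip_car H I \<Longrightarrow> z \<in> ip_car H I \<Longrightarrow> ip_iso H I x z"
  unfolding ip_iso_def using ip_trans by blast

lemma rx_closed: "u \<in> J \<rightarrow>\<^sub>E I \<Longrightarrow> x \<in> ip_car H I \<Longrightarrow> ip_rx H u J I x \<in> ip_car H J"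
  using indexed_preorder[unfolded indexed_preorder_def, THEN conjunct2, THEN conjunct2, THEN conjunct1]
  by blast

lemma rx_mono:
  "u \<in> J \<rightarrow>\<^sub>E I \<Longrightarrow> ip_le H I x y \<Longrightarrow> x \<in> ip_car H I \<Longrightarrow> y \<in> ip_car H I \<Longrightarrow>
    ip_le H J (ip_rx H u J I x) (ip_rx H u J I y)"
  using indexed_preorder[unfolded indexed_preorder_def, THEN conjunct2, THEN conjunct2, THEN conjunct2,
      THEN conjunct1]
  by blast

lemma rx_id: "x \<in> ip_car H I \<Longrightarrow> ip_iso H I (ip_rx H (\<lambda>i\<in>I. i) I I x) x"
  using indexed_preorder[unfolded indexed_preorder_def, THEN conjunct2, THEN conjunct2, THEN conjunct2,
      THEN conjunct2, THEN conjunct1]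
  by blast

lemma rx_compose:
  "u \<in> J \<rightarrow>\<^sub>E I \<Longrightarrow> v \<in> K \<rightarrow>\<^sub>E J \<Longrightarrow> x \<in> ip_car H I \<Longrightarrow>
    ip_iso H K (ip_rx H (compose K u v) K I x) (ip_rx H v K J (ip_rx H u J I x))"
  using indexed_preorder[unfolded indexed_preorder_def, THEN conjunct2, THEN conjunct2, THEN conjunct2,
      THEN conjunct2, THEN conjunct2]
  by blast

lemma ex_closed: "u \<in> J \<rightarrow>\<^sub>E I \<Longrightarrow> x \<in> ip_car H J \<Longrightarrow> ex u J I x \<in> ip_car H I"
  using has_exists[unfolded has_exists_def, THEN conjunct1] by blast

lemma ex_adjoint:
  "u \<in> J \<rightarrow>\<^sub>E I \<Longrightarrow> x \<in> ip_car H J \<Longrightarrow> y \<in> ip_car H I \<Longrightarrow>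
    ip_le H I (ex u J I x) y \<longleftrightarrow> ip_le H J x (ip_rx H u J I y)"
  using has_exists[unfolded has_exists_def, THEN conjunct1] by blast

lemma beck_chevalley:
  "is_pullback I J K L u v ub vb \<Longrightarrow> x \<in> ip_car H K \<Longrightarrow>
    ip_iso H J (ip_rx H u J I (ex v K I x)) (ex vb L J (ip_rx H ub L K x))"
  using has_exists[unfolded has_exists_def, THEN conjunct2] by blast

lemmas closed = rx_closed ex_closed compose_PiE

lemma rx_iso:
  "u \<in> J \<rightarrow>\<^sub>E I \<Longrightarrow> ip_iso H I x y \<Longrightarrow> x \<in> ip_car H I \<Longrightarrow> y \<in> ip_car H I \<Longrightarrow>
    ip_iso H J (ip_rx H u J I x) (ip_rx H u J I y)"
  unfolding ip_iso_def using rx_mono by blast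

lemma ex_unit: "u \<in> J \<rightarrow>\<^sub>E I \<Longrightarrow> x \<in> ip_car H J \<Longrightarrow> ip_le H J x (ip_rx H u J I (ex u J I x))"
  by (simp add: ex_adjoint[symmetric] ex_closed ip_refl)

lemma ex_mono:
  assumes u: "u \<in> J \<rightarrow>\<^sub>E I" and le: "ip_le H J x y" and x: "x \<in> ip_car H J" and y: "y \<in> ip_car H J"
  shows "ip_le H I (ex u J I x) (ex u J I y)"
proof -
  note le
  also have "ip_le H J y (ip_rx H u J I (ex u J I y))"
    using u y by (rule ex_unit)
  finally show ?thesis
    using u x y by (simp add: ex_adjoint closed)
qed

lemma ex_iso:
  "u \<in> J \<rightarrow>\<^sub>E I \<Longrightarrow> ip_iso H J x y \<Longrightarrow> x \<in> ip_car H J \<Longrightarrow> y \<in> ip_car H J \<Longrightarrow>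
    ip_iso H I (ex u J I x) (ex u J I y)"
  unfolding ip_iso_def using ex_mono by blast

lemma ip_iso_if_same_upper_bounds:
  assumes "x \<in> ip_car H I" "y \<in> ip_car H I"
    and "\<And>z. z \<in> ip_car H I \<Longrightarrow> ip_le H I x z \<longleftrightarrow> ip_le H I y z"
  shows "ip_iso H I x y"
  using assms ip_refl unfolding ip_iso_def by blast

lemma ip_le_iso_right:
  "ip_iso H I y z \<Longrightarrow> x \<in> ip_car H I \<Longrightarrow> y \<in> ip_car H I \<Longrightarrow> z \<in> ip_car H I \<Longrightarrow>
    ip_le H I x y \<longleftrightarrow> ip_le H I x z"
  unfolding ip_iso_def using ip_trans by blast

lemma ip_le_iso_left:
  "ip_iso H I x y \<Longrightarrow> x \<in> ip_car H I \<Longrightarrow> y \<in> ip_car H I \<Longrightarrow> z \<in> ip_car H I \<Longrightarrow>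
    ip_le H I x z \<longleftrightarrow> ip_le H I y z"
  unfolding ip_iso_def using ip_trans by blast

lemma ex_compose:
  assumes u: "u \<in> J \<rightarrow>\<^sub>E I" and v: "v \<in> K \<rightarrow>\<^sub>E J" and x: "x \<in> ip_car H K"
  shows "ip_iso H I (ex (compose K u v) K I x) (ex u J I (ex v K J x))"
proof (rule ip_iso_if_same_upper_bounds)
  fix z assume z: "z \<in> ip_car H I"
  have "ip_le H I (ex (compose K u v) K I x) z \<longleftrightarrow> ip_le H K x (ip_rx H (compose K u v) K I z)"
    using u v x z by (simp add: ex_adjoint closed)
  also have "\<dots> \<longleftrightarrow> ip_le H K x (ip_rx H v K J (ip_rx H u J I z))"
    using u v x z by (simp add: ip_le_iso_right[OF rx_compose] closed)
  also have "\<dots> \<longleftrightarrow> ip_le H I (ex u J I (ex v K J x)) z"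
    using u v x z by (simp add: ex_adjoint closed)
  finally show "ip_le H I (ex (compose K u v) K I x) z \<longleftrightarrow> ip_le H I (ex u J I (ex v K J x)) z" .
qed (use u v x in \<open>simp_all add: closed\<close>)

lemma ex_id:
  assumes x: "x \<in> ip_car H I"
  shows "ip_iso H I (ex (\<lambda>i\<in>I. i) I I x) x"
proof (rule ip_iso_if_same_upper_bounds)
  fix z assume z: "z \<in> ip_car H I"
  have "ip_le H I (ex (\<lambda>i\<in>I. i) I I x) z \<longleftrightarrow> ip_le H I x (ip_rx H (\<lambda>i\<in>I. i) I I z)"
    using x z by (simp add: ex_adjoint)
  also have "\<dots> \<longleftrightarrow> ip_le H I x z"
    using x z by (simp add: ip_le_iso_right[OF rx_id] closed)
  finally show "ip_le H I (ex (\<lambda>i\<in>I. i) I I x) z \<longleftrightarrow> ip_le H I x z" .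
qed (use x in \<open>simp_all add: closed\<close>)

lemma ex_le_ex_over:
  assumes w: "w \<in> J \<rightarrow>\<^sub>E J'" and u': "u' \<in> J' \<rightarrow>\<^sub>E I"
    and x: "x \<in> ip_car H J" and x': "x' \<in> ip_car H J'"
    and le: "ip_le H J x (ip_rx H w J J' x')"
  shows "ip_le H I (ex (compose J u' w) J I x) (ex u' J' I x')"
proof -
  note le
  also have "ip_le H J (ip_rx H w J J' x') (ip_rx H w J J' (ip_rx H u' J' I (ex u' J' I x')))"
    using w u' x' by (simp add: rx_mono ex_unit closed)
  also have "ip_le H J \<dots> (ip_rx H (compose J u' w) J I (ex u' J' I x'))"
    using w u' x' by (simp add: ip_isoD2 rx_compose closed)
  finally show ?thesis
    using w u' x x' by (simp add: ex_adjoint closed)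
qed

lemma ex_primeD:
  assumes "ex_prime H ex I p" "u \<in> J \<rightarrow>\<^sub>E I" "v \<in> K \<rightarrow>\<^sub>E J" "x \<in> ip_car H K"
    and "ip_le H J (ip_rx H u J I p) (ex v K J x)"
  obtains s where "s \<in> J \<rightarrow>\<^sub>E K" "\<forall>j\<in>J. v (s j) = j" "ip_le H J (ip_rx H u J I p) (ip_rx H s J K x)"
  using assms unfolding ex_prime_def by blast

lemma ex_prime_closed: "ex_prime H ex I p \<Longrightarrow> p \<in> ip_car H I"
  by (simp add: ex_prime_def)

lemma ex_prime_section:
  assumes p: "ex_prime H ex I p" and v: "v \<in> K \<rightarrow>\<^sub>E I" and x: "x \<in> ip_car H K"
    and le: "ip_le H I p (ex v K I x)"
  obtains s where "s \<in> I \<rightarrow>\<^sub>E K" "\<forall>i\<in>I. v (s i) = i" "ip_le H I p (ip_rx H s I K x)"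
proof -
  have pc: "p \<in> ip_car H I"
    using p by (rule ex_prime_closed)
  have "ip_le H I (ip_rx H (\<lambda>i\<in>I. i) I I p) (ex v K I x)"
    using le pc v x by (simp add: ip_le_iso_left[OF rx_id] closed)
  then obtain s where "s \<in> I \<rightarrow>\<^sub>E K" "\<forall>i\<in>I. v (s i) = i"
    and "ip_le H I (ip_rx H (\<lambda>i\<in>I. i) I I p) (ip_rx H s I K x)"
    using ex_primeD[OF p _ v x, of "\<lambda>i\<in>I. i"] by auto
  with pc x show thesis
    by (intro that) (simp_all add: ip_le_iso_left[OF rx_id] closed)
qed

lemma ex_prime_rx:
  assumes w: "w \<in> J \<rightarrow>\<^sub>E I" and p: "ex_prime H ex I p"
  shows "ex_prime H ex J (ip_rx H w J I p)"
  unfolding ex_prime_def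
proof (intro conjI allI impI)
  have pc: "p \<in> ip_car H I"
    using p by (rule ex_prime_closed)
  show "ip_rx H w J I p \<in> ip_car H J"
    using w pc by (rule rx_closed)
  fix J' K u v x
  assume u: "u \<in> J' \<rightarrow>\<^sub>E J" and v: "v \<in> K \<rightarrow>\<^sub>E J'" and x: "x \<in> ip_car H K"
    and le: "ip_le H J' (ip_rx H u J' J (ip_rx H w J I p)) (ex v K J' x)"
  have iso: "ip_iso H J' (ip_rx H (compose J' w u) J' I p) (ip_rx H u J' J (ip_rx H w J I p))"
    using w u pc by (rule rx_compose)
  have "ip_le H J' (ip_rx H (compose J' w u) J' I p) (ex v K J' x)"
    using le u v w x pc by (simp add: ip_le_iso_left[OF iso] closed)
  then obtain s where "s \<in> J' \<rightarrow>\<^sub>E K" "\<forall>j\<in>J'. v (s j) = j"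
    and "ip_le H J' (ip_rx H (compose J' w u) J' I p) (ip_rx H s J' K x)"
    using ex_primeD[OF p compose_PiE[OF u w] v x] by blast
  with u v w x pc
  show "\<exists>s\<in>J' \<rightarrow>\<^sub>E K. (\<forall>j\<in>J'. v (s j) = j) \<and>
          ip_le H J' (ip_rx H u J' J (ip_rx H w J I p)) (ip_rx H s J' K x)"
    by (auto simp: ip_le_iso_left[OF iso] closed)
qed

lemma sub_preorder_prim: "sub_preorder H (prim H ex)"
  unfolding sub_preorder_def prim_def using ex_prime_closed ex_prime_rx by blast

lemma ex_prime_iso_rx_section:
  assumes p: "ex_prime H ex I p" and u: "u \<in> J \<rightarrow>\<^sub>E I" and a: "a \<in> ip_car H J"
    and iso: "ip_iso H I p (ex u J I a)"
  obtains s where "s \<in> I \<rightarrow>\<^sub>E J" "ip_iso H I p (ip_rx H s I J a)"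
proof -
  have pc: "p \<in> ip_car H I"
    using p by (rule ex_prime_closed)
  obtain s where s: "s \<in> I \<rightarrow>\<^sub>E J" "\<forall>i\<in>I. u (s i) = i" and le: "ip_le H I p (ip_rx H s I J a)"
    using p u a ip_isoD1[OF iso] by (rule ex_prime_section)
  have us: "compose I u s = (\<lambda>i\<in>I. i)"
    using s(2) by (auto simp: compose_def)
  have "ip_le H I (ip_rx H s I J a) (ip_rx H s I J (ip_rx H u J I (ex u J I a)))"
    using s(1) u a by (simp add: rx_mono ex_unit closed)
  also have "ip_le H I \<dots> (ip_rx H (\<lambda>i\<in>I. i) I I (ex u J I a))"
    using ip_isoD2[OF rx_compose[OF u s(1) ex_closed[OF u a]]] unfolding us .
  also have "ip_le H I \<dots> (ex u J I a)"
    using u a by (simp add: ip_isoD1 rx_id closed)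
  also have "ip_le H I \<dots> p"
    using iso by (rule ip_isoD2)
  finally have "ip_le H I (ip_rx H s I J a) p"
    using s(1) u a pc by (simp add: closed)
  with s(1) le show thesis
    by (intro that) (simp_all add: ip_iso_def)
qed

lemma ex_le_ex_factor:
  assumes inf: "infinite (UNIV :: 'u set)" and p: "ex_prime H ex J p"
    and u: "u \<in> J \<rightarrow>\<^sub>E I" and u': "u' \<in> J' \<rightarrow>\<^sub>E I" and p': "p' \<in> ip_car H J'"
    and le: "ip_le H I (ex u J I p) (ex u' J' I p')"
  obtains w where "w \<in> J \<rightarrow>\<^sub>E J'" "compose J u' w = u" "ip_le H J p (ip_rx H w J J' p')"
proof -
  have pc: "p \<in> ip_car H J"
    using p by (rule ex_prime_closed)
  obtain L ub vb where pb: "is_pullback I J J' L u u' ub vb"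
    using pullback_exists[OF inf u u'] .
  then have ub: "ub \<in> L \<rightarrow>\<^sub>E J'" and vb: "vb \<in> L \<rightarrow>\<^sub>E J"
    and square: "\<And>l. l \<in> L \<Longrightarrow> u (vb l) = u' (ub l)"
    unfolding is_pullback_def bij_betw_def by auto
  have "ip_le H J p (ip_rx H u J I (ex u' J' I p'))"
    using le u u' pc p' by (simp add: ex_adjoint closed)
  also have "ip_le H J \<dots> (ex vb L J (ip_rx H ub L J' p'))"
    using pb p' by (rule ip_isoD1[OF beck_chevalley])
  finally have "ip_le H J p (ex vb L J (ip_rx H ub L J' p'))"
    using u u' ub vb pc p' by (simp add: closed)
  then obtain s where s: "s \<in> J \<rightarrow>\<^sub>E L" "\<forall>j\<in>J. vb (s j) = j"
    and ps: "ip_le H J p (ip_rx H s J L (ip_rx H ub L J' p'))"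
    using p vb ub p' by (elim ex_prime_section) (simp_all add: closed)
  show thesis
  proof
    show "compose J ub s \<in> J \<rightarrow>\<^sub>E J'"
      using s(1) ub by (rule compose_PiE)
    show "compose J u' (compose J ub s) = u"
    proof
      fix j
      show "compose J u' (compose J ub s) j = u j"
        using u s(2) square[of "s j"] PiE_mem[OF s(1), of j] by (cases "j \<in> J") (auto simp: compose_def)
    qed
    show "ip_le H J p (ip_rx H (compose J ub s) J J' p')"
      using ps ub s(1) pc p' by (simp add: ip_le_iso_right[OF rx_compose] closed)
  qed
qed

end

locale prime_basis = exists_ipre H ex
  for H :: "('u, 'p) ipre" and ex :: "('u \<Rightarrow> 'u) \<Rightarrow> 'u set \<Rightarrow> 'u set \<Rightarrow> 'p \<Rightarrow> 'p" +
  fixes A :: "'u set \<Rightarrow> 'p set"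
  assumes sub_preorder: "sub_preorder H A"
    and basis_prime: "A I \<subseteq> prim H ex I"
    and basis_covers: "x \<in> ip_car H I \<Longrightarrow> \<exists>J u a. u \<in> J \<rightarrow>\<^sub>E I \<and> a \<in> A J \<and> ip_iso H I x (ex u J I a)"
begin

lemma basis_closed: "a \<in> A I \<Longrightarrow> a \<in> ip_car H I"
  using sub_preorder unfolding sub_preorder_def by blast

lemma basis_rx: "u \<in> J \<rightarrow>\<^sub>E I \<Longrightarrow> a \<in> A I \<Longrightarrow> ip_rx H u J I a \<in> A J"
  using sub_preorder unfolding sub_preorder_def by blast

lemma basis_ex_prime: "a \<in> A I \<Longrightarrow> ex_prime H ex I a"
  using basis_prime unfolding prim_def by blast

lemma prim_iso_basis:
  assumes "p \<in> prim H ex I"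
  shows "\<exists>a\<in>A I. ip_iso H I p a"
proof -
  have p: "ex_prime H ex I p"
    using assms by (simp add: prim_def)
  obtain J u a where u: "u \<in> J \<rightarrow>\<^sub>E I" and a: "a \<in> A J" and iso: "ip_iso H I p (ex u J I a)"
    using basis_covers[OF ex_prime_closed[OF p]] by blast
  obtain s where "s \<in> I \<rightarrow>\<^sub>E J" "ip_iso H I p (ip_rx H s I J a)"
    using p u basis_closed[OF a] iso by (rule ex_prime_iso_rx_section)
  then show ?thesis
    using a basis_rx by blast
qed

definition cover :: "'u set \<Rightarrow> 'p \<Rightarrow> 'u set \<times> ('u \<Rightarrow> 'u) \<times> 'p" where
  "cover I x = (SOME (J, u, a). u \<in> J \<rightarrow>\<^sub>E I \<and> a \<in> A J \<and> ip_iso H I x (ex u J I a))"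

lemma cover_spec:
  assumes "x \<in> ip_car H I"
  obtains J u a where "cover I x = (J, u, a)" "u \<in> J \<rightarrow>\<^sub>E I" "a \<in> A J" "ip_iso H I x (ex u J I a)"
proof -
  have "\<exists>c. case c of (J, u, a) \<Rightarrow> u \<in> J \<rightarrow>\<^sub>E I \<and> a \<in> A J \<and> ip_iso H I x (ex u J I a)"
    using basis_covers[OF assms] by auto
  then have "case cover I x of (J, u, a) \<Rightarrow> u \<in> J \<rightarrow>\<^sub>E I \<and> a \<in> A J \<and> ip_iso H I x (ex u J I a)"
    unfolding cover_def by (rule someI_ex)
  then show thesis
    using that by (cases "cover I x") simp
qed

end

locale prime_basis_extension = H: prime_basis H exH A + K: exists_ipre K exK
  for H :: "('u, 'p) ipre" and exH :: "('u \<Rightarrow> 'u) \<Rightarrow> 'u set \<Rightarrow> 'u set \<Rightarrow> 'p \<Rightarrow> 'p"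
    and A :: "'u set \<Rightarrow> 'p set"
    and K :: "('u, 'q) ipre" and exK :: "('u \<Rightarrow> 'u) \<Rightarrow> 'u set \<Rightarrow> 'u set \<Rightarrow> 'q \<Rightarrow> 'q" +
  assumes infinite_universe: "infinite (UNIV :: 'u set)"
begin

lemma restr_closed: "ihom (H\<lparr>ip_car := A\<rparr>) K f \<Longrightarrow> a \<in> A I \<Longrightarrow> f I a \<in> ip_car K I"
  by (simp add: ihom_def)

lemma restr_mono:
  "ihom (H\<lparr>ip_car := A\<rparr>) K f \<Longrightarrow> ip_le H I a b \<Longrightarrow> a \<in> A I \<Longrightarrow> b \<in> A I \<Longrightarrow>
    ip_le K I (f I a) (f I b)"
  by (simp add: ihom_def)

lemma restr_rx:
  "ihom (H\<lparr>ip_car := A\<rparr>) K f \<Longrightarrow> u \<in> J \<rightarrow>\<^sub>E I \<Longrightarrow> a \<in> A I \<Longrightarrow>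
    ip_iso K J (f J (ip_rx H u J I a)) (ip_rx K u J I (f I a))"
  by (simp add: ihom_def)

lemma restr_ex_le_ex:
  assumes f: "ihom (H\<lparr>ip_car := A\<rparr>) K f"
    and u: "u \<in> J \<rightarrow>\<^sub>E I" and a: "a \<in> A J" and u': "u' \<in> J' \<rightarrow>\<^sub>E I" and a': "a' \<in> A J'"
    and le: "ip_le H I (exH u J I a) (exH u' J' I a')"
  shows "ip_le K I (exK u J I (f J a)) (exK u' J' I (f J' a'))"
proof -
  obtain w where w: "w \<in> J \<rightarrow>\<^sub>E J'" and uw: "compose J u' w = u"
    and le_w: "ip_le H J a (ip_rx H w J J' a')"
    using H.ex_le_ex_factor[OF infinite_universe H.basis_ex_prime[OF a] u u' H.basis_closed[OF a'] le] .
  have "ip_le K J (f J a) (f J (ip_rx H w J J' a'))"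
    using f le_w a H.basis_rx[OF w a'] by (rule restr_mono)
  also have "ip_le K J \<dots> (ip_rx K w J J' (f J' a'))"
    using f w a' by (rule ip_isoD1[OF restr_rx])
  finally have "ip_le K J (f J a) (ip_rx K w J J' (f J' a'))"
    using f w a a' by (simp add: restr_closed H.basis_rx K.closed)
  from K.ex_le_ex_over[OF w u' restr_closed[OF f a] restr_closed[OF f a'] this]
  show ?thesis
    unfolding uw .
qed

definition ex_extend :: "('u set \<Rightarrow> 'p \<Rightarrow> 'q) \<Rightarrow> 'u set \<Rightarrow> 'p \<Rightarrow> 'q" where
  "ex_extend f I x = (case H.cover I x of (J, u, a) \<Rightarrow> exK u J I (f J a))"

lemma ex_extend_cover: "H.cover I x = (J, u, a) \<Longrightarrow> ex_extend f I x = exK u J I (f J a)"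
  by (simp add: ex_extend_def)

lemma ex_extend_closed:
  assumes f: "ihom (H\<lparr>ip_car := A\<rparr>) K f" and x: "x \<in> ip_car H I"
  shows "ex_extend f I x \<in> ip_car K I"
proof -
  obtain J u a where "H.cover I x = (J, u, a)" "u \<in> J \<rightarrow>\<^sub>E I" "a \<in> A J"
    using H.cover_spec[OF x] .
  then show ?thesis
    by (simp add: ex_extend_cover K.ex_closed restr_closed[OF f])
qed

lemma ex_extend_iso_ex:
  assumes f: "ihom (H\<lparr>ip_car := A\<rparr>) K f" and x: "x \<in> ip_car H I"
    and u: "u \<in> J \<rightarrow>\<^sub>E I" and a: "a \<in> A J" and iso: "ip_iso H I x (exH u J I a)"
  shows "ip_iso K I (ex_extend f I x) (exK u J I (f J a))"
proof -
  obtain J0 u0 a0 where c: "H.cover I x = (J0, u0, a0)" and u0: "u0 \<in> J0 \<rightarrow>\<^sub>E I" and a0: "a0 \<in> A J0"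
    and iso0: "ip_iso H I x (exH u0 J0 I a0)"
    using H.cover_spec[OF x] .
  have "ip_iso H I (exH u0 J0 I a0) (exH u J I a)"
    using ip_iso_sym[OF iso0] iso x u u0 a a0 by (blast intro: H.ip_iso_trans H.closed H.basis_closed)
  then show ?thesis
    unfolding ex_extend_cover[OF c] ip_iso_def
    using restr_ex_le_ex[OF f u0 a0 u a] restr_ex_le_ex[OF f u a u0 a0] by blast
qed

lemma ex_extend_mono:
  assumes f: "ihom (H\<lparr>ip_car := A\<rparr>) K f" and le: "ip_le H I x y"
    and x: "x \<in> ip_car H I" and y: "y \<in> ip_car H I"
  shows "ip_le K I (ex_extend f I x) (ex_extend f I y)"
proof -
  obtain J u a where c: "H.cover I x = (J, u, a)" and u: "u \<in> J \<rightarrow>\<^sub>E I" and a: "a \<in> A J"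
    and iso: "ip_iso H I x (exH u J I a)"
    using H.cover_spec[OF x] .
  obtain J' u' a' where c': "H.cover I y = (J', u', a')" and u': "u' \<in> J' \<rightarrow>\<^sub>E I" and a': "a' \<in> A J'"
    and iso': "ip_iso H I y (exH u' J' I a')"
    using H.cover_spec[OF y] .
  have "ip_le H I (exH u J I a) x"
    using iso by (rule ip_isoD2)
  also note le
  also have "ip_le H I y (exH u' J' I a')"
    using iso' by (rule ip_isoD1)
  finally have "ip_le H I (exH u J I a) (exH u' J' I a')"
    using x y u u' a a' by (simp add: H.closed H.basis_closed)
  then show ?thesis
    unfolding ex_extend_cover[OF c] ex_extend_cover[OF c'] by (rule restr_ex_le_ex[OF f u a u' a'])
qed

lemma ex_extend_rx:
  assumes f: "ihom (H\<lparr>ip_car := A\<rparr>) K f" and w: "w \<in> I' \<rightarrow>\<^sub>E I" and x: "x \<in> ip_car H I"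
  shows "ip_iso K I' (ex_extend f I' (ip_rx H w I' I x)) (ip_rx K w I' I (ex_extend f I x))"
proof -
  obtain J u a where c: "H.cover I x = (J, u, a)" and u: "u \<in> J \<rightarrow>\<^sub>E I" and a: "a \<in> A J"
    and iso: "ip_iso H I x (exH u J I a)"
    using H.cover_spec[OF x] .
  obtain L ub vb where pb: "is_pullback I I' J L w u ub vb"
    using pullback_exists[OF infinite_universe w u] .
  then have ub: "ub \<in> L \<rightarrow>\<^sub>E J" and vb: "vb \<in> L \<rightarrow>\<^sub>E I'"
    unfolding is_pullback_def by auto
  note carriers = H.closed K.closed H.basis_closed H.basis_rx restr_closed[OF f]
  have "ip_iso H I' (ip_rx H w I' I x) (ip_rx H w I' I (exH u J I a))"
    using w iso x u a by (simp add: H.rx_iso carriers)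
  also have "ip_iso H I' \<dots> (exH vb L I' (ip_rx H ub L J a))"
    using pb H.basis_closed[OF a] by (rule H.beck_chevalley)
  finally have "ip_iso H I' (ip_rx H w I' I x) (exH vb L I' (ip_rx H ub L J a))"
    using x w u ub vb a by (simp add: carriers)
  then have "ip_iso K I' (ex_extend f I' (ip_rx H w I' I x)) (exK vb L I' (f L (ip_rx H ub L J a)))"
    using x w u ub vb a by (simp add: ex_extend_iso_ex[OF f] carriers)
  also have "ip_iso K I' \<dots> (exK vb L I' (ip_rx K ub L J (f J a)))"
    using vb restr_rx[OF f ub a] ub a by (simp add: K.ex_iso carriers)
  also have "ip_iso K I' \<dots> (ip_rx K w I' I (exK u J I (f J a)))"
    using pb restr_closed[OF f a] by (rule ip_iso_sym[OF K.beck_chevalley])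
  finally show ?thesis
    unfolding ex_extend_cover[OF c] using x w u ub vb a by (simp add: ex_extend_closed[OF f] carriers)
qed

lemma ex_extend_ex:
  assumes f: "ihom (H\<lparr>ip_car := A\<rparr>) K f" and w: "w \<in> I \<rightarrow>\<^sub>E I'" and x: "x \<in> ip_car H I"
  shows "ip_iso K I' (ex_extend f I' (exH w I I' x)) (exK w I I' (ex_extend f I x))"
proof -
  obtain J u a where c: "H.cover I x = (J, u, a)" and u: "u \<in> J \<rightarrow>\<^sub>E I" and a: "a \<in> A J"
    and iso: "ip_iso H I x (exH u J I a)"
    using H.cover_spec[OF x] .
  note carriers = H.closed K.closed H.basis_closed restr_closed[OF f]
  have "ip_iso H I' (exH w I I' x) (exH w I I' (exH u J I a))"
    using w iso x u a by (simp add: H.ex_iso carriers)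
  also have "ip_iso H I' \<dots> (exH (compose J w u) J I' a)"
    using w u H.basis_closed[OF a] by (rule ip_iso_sym[OF H.ex_compose])
  finally have "ip_iso H I' (exH w I I' x) (exH (compose J w u) J I' a)"
    using x w u a by (simp add: carriers)
  then have "ip_iso K I' (ex_extend f I' (exH w I I' x)) (exK (compose J w u) J I' (f J a))"
    using x w u a by (simp add: ex_extend_iso_ex[OF f] carriers)
  also have "ip_iso K I' \<dots> (exK w I I' (exK u J I (f J a)))"
    using w u restr_closed[OF f a] by (rule K.ex_compose)
  finally show ?thesis
    unfolding ex_extend_cover[OF c] using x w u a by (simp add: ex_extend_closed[OF f] carriers)
qed

lemma ex_hom_ex_extend:
  assumes f: "ihom (H\<lparr>ip_car := A\<rparr>) K f"
  shows "ex_hom H exH K exK (ex_extend f)"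
  unfolding ex_hom_def ihom_def
  using ex_extend_closed[OF f] ex_extend_mono[OF f] ex_extend_rx[OF f] ex_extend_ex[OF f] by blast

lemma hom_le_ex_extend:
  assumes f: "ihom (H\<lparr>ip_car := A\<rparr>) K f" and f': "ihom (H\<lparr>ip_car := A\<rparr>) K f'"
    and le: "hom_le (H\<lparr>ip_car := A\<rparr>) K f f'"
  shows "hom_le H K (ex_extend f) (ex_extend f')"
  unfolding hom_le_def
proof (intro allI ballI)
  fix I x
  assume x: "x \<in> ip_car H I"
  obtain J u a where c: "H.cover I x = (J, u, a)" and u: "u \<in> J \<rightarrow>\<^sub>E I" and a: "a \<in> A J"
    using H.cover_spec[OF x] .
  have "ip_le K J (f J a) (f' J a)"
    using le a by (simp add: hom_le_def)
  then show "ip_le K I (ex_extend f I x) (ex_extend f' I x)"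
    unfolding ex_extend_cover[OF c] using u a by (simp add: K.ex_mono restr_closed f f')
qed

lemma ex_extend_restrict_iso:
  assumes f: "ihom (H\<lparr>ip_car := A\<rparr>) K f" and a: "a \<in> A I"
  shows "ip_iso K I (ex_extend f I a) (f I a)"
proof -
  have "ip_iso K I (ex_extend f I a) (exK (\<lambda>i\<in>I. i) I I (f I a))"
    using f H.basis_closed[OF a] _ a ip_iso_sym[OF H.ex_id[OF H.basis_closed[OF a]]]
    by (rule ex_extend_iso_ex) simp
  also have "ip_iso K I \<dots> (f I a)"
    using restr_closed[OF f a] by (rule K.ex_id)
  finally show ?thesis
    using a by (simp add: ex_extend_closed[OF f] K.closed H.basis_closed restr_closed[OF f])
qed

lemma ex_extend_ex_hom_iso:
  assumes g: "ex_hom H exH K exK g" and x: "x \<in> ip_car H I"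
  shows "ip_iso K I (ex_extend g I x) (g I x)"
proof -
  have g_hom: "ihom H K g"
    using g by (simp add: ex_hom_def)
  obtain J u a where c: "H.cover I x = (J, u, a)" and u: "u \<in> J \<rightarrow>\<^sub>E I" and a: "a \<in> A J"
    and iso: "ip_iso H I x (exH u J I a)"
    using H.cover_spec[OF x] .
  note carriers = H.closed K.closed H.basis_closed ihom_closed[OF g_hom]
  have "ip_iso K I (exK u J I (g J a)) (g I (exH u J I a))"
    using g u H.basis_closed[OF a] by (rule ip_iso_sym[OF ex_hom_ex])
  also have "ip_iso K I \<dots> (g I x)"
    using g_hom ip_iso_sym[OF iso] u a x by (simp add: ihom_iso carriers)
  finally show ?thesis
    unfolding ex_extend_cover[OF c] using u a x by (simp add: carriers)
qed

theorem ex_completion: "ex_completion_wrt H exH A K exK"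
proof -
  have A_car: "\<And>I. A I \<subseteq> ip_car H I"
    using H.basis_closed by blast
  have restrict: "ihom (H\<lparr>ip_car := A\<rparr>) K g" if "ex_hom H exH K exK g" for g
    using that A_car by (simp add: ex_hom_def ihom_restrict)
  have unit: "hom_le H K (ex_extend g) g \<and> hom_le H K g (ex_extend g)"
    if "ex_hom H exH K exK g" for g
    using ex_extend_ex_hom_iso[OF that] by (simp add: hom_le_def ip_iso_def)
  have counit: "hom_le (H\<lparr>ip_car := A\<rparr>) K (ex_extend f) f \<and> hom_le (H\<lparr>ip_car := A\<rparr>) K f (ex_extend f)"
    if "ihom (H\<lparr>ip_car := A\<rparr>) K f" for f
    using ex_extend_restrict_iso[OF that] by (simp add: hom_le_def ip_iso_def)
  show ?thesis
    unfolding ex_completion_wrt_def preorder_equiv_def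
    using restrict hom_le_restrict[OF _ A_car] ex_hom_ex_extend hom_le_ex_extend unit counit
    by (intro conjI exI[of _ ex_extend]) auto
qed

end

theorem proposition4p3:
  fixes H :: "('u, 'p) ipre"
    and exH :: "('u \<Rightarrow> 'u) \<Rightarrow> 'u set \<Rightarrow> 'u set \<Rightarrow> 'p \<Rightarrow> 'p"
  assumes "infinite (UNIV :: 'u set)"
    and "indexed_preorder H"
    and "has_exists H exH"
  shows "(\<forall>A. sub_preorder H A \<and> (\<forall>I. A I \<subseteq> prim H exH I) \<and>
              (\<forall>I. \<forall>x\<in>ip_car H I. \<exists>J u p. u \<in> J \<rightarrow>\<^sub>E I \<and> p \<in> A J \<and> ip_iso H I x (exH u J I p))
           \<longrightarrow> (\<forall>(K :: ('u, 'q) ipre) exK. indexed_preorder K \<and> has_exists K exK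
                   \<longrightarrow> ex_completion_wrt H exH A K exK) \<and>
               (\<forall>I. \<forall>p\<in>prim H exH I. \<exists>a\<in>A I. ip_iso H I p a)) \<and>
         (enough_primes H exH \<longrightarrow>
            (\<forall>(K :: ('u, 'q) ipre) exK. indexed_preorder K \<and> has_exists K exK
                   \<longrightarrow> ex_completion_wrt H exH (prim H exH) K exK))"
proof -
  interpret H: exists_ipre H exH
    using assms(2,3) by unfold_locales
  have basis: "(\<forall>(K :: ('u, 'q) ipre) exK. indexed_preorder K \<and> has_exists K exK
                   \<longrightarrow> ex_completion_wrt H exH A K exK) \<and>
               (\<forall>I. \<forall>p\<in>prim H exH I. \<exists>a\<in>A I. ip_iso H I p a)"
    if "sub_preorder H A" "\<forall>I. A I \<subseteq> prim H exH I"
      "\<forall>I. \<forall>x\<in>ip_car H I. \<exists>J u p. u \<in> J \<rightarrow>\<^sub>E I \<and> p \<in> A J \<and> ip_iso H I x (exH u J I p)" for A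
  proof -
    interpret prime_basis H exH A
      using that by unfold_locales auto
    have "ex_completion_wrt H exH A K exK"
      if "indexed_preorder K" "has_exists K exK" for K :: "('u, 'q) ipre" and exK
    proof -
      interpret prime_basis_extension H exH A K exK
        using that assms(1) by unfold_locales
      show ?thesis
        by (rule ex_completion)
    qed
    then show ?thesis
      using prim_iso_basis by blast
  qed
  have "(\<forall>(K :: ('u, 'q) ipre) exK. indexed_preorder K \<and> has_exists K exK
            \<longrightarrow> ex_completion_wrt H exH (prim H exH) K exK)"
    if "enough_primes H exH"
    using basis[OF H.sub_preorder_prim] that by (simp add: enough_primes_def prim_def)
  with basis show ?thesis
    by blast
qed

end
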